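(* Let $p>1$ and let $\{(x_i,y_i)\}_{i=1}^n\subset\mathbb{R}^d\times\{\pm1\}$ be linearly separable with $\max_i\|x_i\|_q<C$ for some constant $C$, where $1/p+1/q=1$. Let $L(w)=\frac1n\sum_{i=1}^n\ell(y_i\langle w,x_i\rangle)$ with $\ell$ decreasing, convex, not attaining its minimum, $\inf\ell=0$, and suppose $\ell$ has an exponential tail: $\lim_{z\to\infty}\ell(z)e^{az}=b$ for some constants $a>0$, $b>0$. Then the regularized direction $\bar w^{\mathrm{reg}}_p$ with respect to the $\ell_p$-norm exists and equals the max-margin direction $\bar w^{\mathrm{mm}}_p$.
   Context: The regularization path is $\bar w_p(B)=\arg\min_{\|w\|_p\le B}L(w)$; if $\lim_{B\to\infty}\bar w_p(B)/B$ exists it is the regularized direction $\bar w^{\mathrm{reg}}_p$. The margin of $w$ is $\gamma(w)=\min_i y_i\langle x_i,w\rangle$, and the max-margin direction is $\bar w^{\mathrm{mm}}_p=\arg\max_{\|w\|_p\le1}\min_{i}y_i\langle x_i,w\rangle$. Linear separability means there is $w^*$ with $\mathrm{sign}(\langle w^*,x_i\rangle)=y_i$ for all $i$. *)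

theory Defs
  imports "HOL-Analysis.Analysis"
begin

definition lpnorm :: "real \<Rightarrow> real^'d \<Rightarrow> real" where
  "lpnorm p w = (\<Sum>i\<in>UNIV. \<bar>w $ i\<bar> powr p) powr (1 / p)"

definition emp_loss :: "(real \<Rightarrow> real) \<Rightarrow> nat \<Rightarrow> (nat \<Rightarrow> real^'d) \<Rightarrow> (nat \<Rightarrow> real)
    \<Rightarrow> real^'d \<Rightarrow> real" where
  "emp_loss loss n x y w = (1 / real n) * (\<Sum>i<n. loss (y i * (w \<bullet> x i)))"

definition margin :: "nat \<Rightarrow> (nat \<Rightarrow> real^'d) \<Rightarrow> (nat \<Rightarrow> real) \<Rightarrow> real^'d \<Rightarrow> real" where
  "margin n x y w = Min ((\<lambda>i. y i * (x i \<bullet> w)) ` {..<n})"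

definition linearly_separable :: "nat \<Rightarrow> (nat \<Rightarrow> real^'d) \<Rightarrow> (nat \<Rightarrow> real) \<Rightarrow> bool" where
  "linearly_separable n x y \<longleftrightarrow> (\<exists>w. \<forall>i<n. sgn (w \<bullet> x i) = y i)"

definition is_reg_min :: "real \<Rightarrow> (real^'d \<Rightarrow> real) \<Rightarrow> real \<Rightarrow> real^'d \<Rightarrow> bool" where
  "is_reg_min p L B w \<longleftrightarrow> lpnorm p w \<le> B \<and> (\<forall>v. lpnorm p v \<le> B \<longrightarrow> L w \<le> L v)"

definition is_max_margin :: "real \<Rightarrow> nat \<Rightarrow> (nat \<Rightarrow> real^'d) \<Rightarrow> (nat \<Rightarrow> real) \<Rightarrow> real^'d \<Rightarrow> bool" where
  "is_max_margin p n x y u \<longleftrightarrow> lpnorm p u \<le> 1 \<and>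
     (\<forall>w. lpnorm p w \<le> 1 \<longrightarrow> margin n x y w \<le> margin n x y u)"

end

theory Submission
  imports Defs
begin

(* For p > 1 the l_p unit ball is strictly convex, while the margin is continuous, positively
   homogeneous and superadditive; hence it has a unique maximizer u on the unit ball, and its
   margin g is positive by separability. If the normalized regularization path point
   wbar B / B had margin at most g1 < g, then L (wbar B) >= loss (B g1) / n, whereas
   L (wbar B) <= L (B u) <= loss (B g); the exponential tail gives loss (B g) / loss (B g1) -> 0,
   so eventually the normalized path has margin above every g1 < g, and compactness of the unit
   ball turns this into convergence to u. *)

lemma powr_midpoint_less:
  fixes p s t :: real
  assumes "p > 1" "0 \<le> s" "s < t"
  shows "((s + t) / 2) powr p < (s powr p + t powr p) / 2"
proof -
  define m where "m = (s + t) / 2"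
  have m: "s < m" "m < t" "m - s = t - m"
    using assms by (auto simp: m_def field_simps)
  have mvt: "\<exists>z. l < z \<and> z < r \<and> r powr p - l powr p = (r - l) * (p * z powr (p - 1))"
    if "0 \<le> l" "l < r" for l r :: real
  proof -
    have "continuous_on {l..r} (\<lambda>t. t powr p)"
      using assms that by (intro continuous_on_powr' continuous_intros) auto
    moreover have deriv: "DERIV (\<lambda>t. t powr p) z :> p * z powr (p - 1)" if "l < z" for z
      using that \<open>0 \<le> l\<close> by (intro has_real_derivative_powr) auto
    ultimately obtain d z where "l < z" "z < r" "DERIV (\<lambda>t. t powr p) z :> d"
        "r powr p - l powr p = (r - l) * d"
      using MVT[OF \<open>l < r\<close>] real_differentiable_def by meson
    then show ?thesis
      using DERIV_unique deriv by metis
  qed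
  obtain z1 where z1: "s < z1" "z1 < m" "m powr p - s powr p = (m - s) * (p * z1 powr (p - 1))"
    using mvt[of s m] assms m by auto
  obtain z2 where z2: "m < z2" "z2 < t" "t powr p - m powr p = (t - m) * (p * z2 powr (p - 1))"
    using mvt[of m t] assms m by auto
  \<comment> \<open>the derivative p t^(p-1) is strictly increasing,
    so t^p gains more on [m, t] than on [s, m]\<close>
  have "z1 powr (p - 1) < z2 powr (p - 1)"
    using assms z1 z2 by (intro powr_less_mono2) auto
  then have "m powr p - s powr p < t powr p - m powr p"
    using z1(3) z2(3) m assms by simp
  then show ?thesis
    unfolding m_def[symmetric] by simp
qed

lemma abs_midpoint_powr_less:
  fixes p s t :: real
  assumes "p > 1" "s \<noteq> t"
  shows "\<bar>(s + t) / 2\<bar> powr p < (\<bar>s\<bar> powr p + \<bar>t\<bar> powr p) / 2"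
proof (cases "\<bar>s\<bar> = \<bar>t\<bar>")
  case True
  with assms(2) have "s + t = 0" "t \<noteq> 0"
    by (auto simp: abs_eq_iff)
  then show ?thesis
    by (simp add: add_nonneg_pos)
next
  case False
  have "\<bar>(s + t) / 2\<bar> powr p \<le> ((\<bar>s\<bar> + \<bar>t\<bar>) / 2) powr p"
    using assms by (intro powr_mono2) auto
  also have "\<dots> < (\<bar>s\<bar> powr p + \<bar>t\<bar> powr p) / 2"
    using False powr_midpoint_less[OF assms(1), of "\<bar>s\<bar>" "\<bar>t\<bar>"]
      powr_midpoint_less[OF assms(1), of "\<bar>t\<bar>" "\<bar>s\<bar>"]
    by (cases "\<bar>s\<bar> < \<bar>t\<bar>") (auto simp: add.commute)
  finally show ?thesis .
qed

lemma abs_midpoint_powr_le: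
  fixes p s t :: real
  assumes "p > 1"
  shows "\<bar>(s + t) / 2\<bar> powr p \<le> (\<bar>s\<bar> powr p + \<bar>t\<bar> powr p) / 2"
  using abs_midpoint_powr_less[OF assms, of s t] by (cases "s = t") auto

lemma continuous_on_Min_finite:
  fixes f :: "'i \<Rightarrow> 'a::topological_space \<Rightarrow> 'b::linorder_topology"
  assumes "finite I" "I \<noteq> {}" "\<And>i. i \<in> I \<Longrightarrow> continuous_on S (f i)"
  shows "continuous_on S (\<lambda>w. Min ((\<lambda>i. f i w) ` I))"
  using assms
proof (induction I rule: finite_ne_induct)
  case (insert i I)
  then show ?case
    by (simp add: continuous_on_min)
qed simp

lemma tendsto_unique_maximizer:
  fixes f :: "'a::metric_space \<Rightarrow> real" and v :: "'b \<Rightarrow> 'a"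
  assumes "compact K" "continuous_on K f" "u \<in> K"
    and unique: "\<And>w. w \<in> K \<Longrightarrow> w \<noteq> u \<Longrightarrow> f w < f u"
    and "eventually (\<lambda>t. v t \<in> K) F"
    and near_max: "\<And>c. c < f u \<Longrightarrow> eventually (\<lambda>t. c < f (v t)) F"
  shows "(v \<longlongrightarrow> u) F"
proof (rule tendstoI)
  fix e :: real assume "e > 0"
  define K' where "K' = K \<inter> {w. e \<le> dist w u}"
  have "eventually (\<lambda>t. v t \<notin> K') F"
  proof (cases "K' = {}")
    case False
    have "compact K'"
      unfolding K'_def using assms(1) by (intro compact_Int_closed closed_Collect_le continuous_intros)
    then obtain k where k: "k \<in> K'" "\<forall>w\<in>K'. f w \<le> f k"
      using continuous_attains_sup[OF _ False continuous_on_subset[OF assms(2)]] K'_def by blast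
    have "f k < f u"
      using unique k(1) \<open>e > 0\<close> unfolding K'_def by force
    then show ?thesis
      using near_max[of "f k"] k(2) by (auto elim!: eventually_mono)
  qed simp
  with assms(5) show "eventually (\<lambda>t. dist (v t) u < e) F"
    unfolding K'_def by eventually_elim auto
qed

lemma lpnorm_nonneg: "lpnorm p w \<ge> 0"
  unfolding lpnorm_def by simp

lemma lpnorm_powr:
  assumes "p > 0"
  shows "lpnorm p w powr p = (\<Sum>i\<in>UNIV. \<bar>w $ i\<bar> powr p)"
  using assms by (simp add: lpnorm_def powr_powr sum_nonneg)

lemma abs_component_le_lpnorm:
  assumes "p > 0"
  shows "\<bar>w $ i\<bar> \<le> lpnorm p w"
proof -
  have "\<bar>w $ i\<bar> powr p \<le> lpnorm p w powr p"
    unfolding lpnorm_powr[OF assms] by (rule member_le_sum) auto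
  then show ?thesis
    using assms lpnorm_nonneg[of p w] by (meson not_le powr_less_mono2)
qed

lemma lpnorm_eq_0_iff:
  assumes "p > 0"
  shows "lpnorm p w = 0 \<longleftrightarrow> w = 0"
  using abs_component_le_lpnorm[OF assms, of w] assms
  by (auto simp: vec_eq_iff lpnorm_def intro: antisym)

lemma lpnorm_scaleR:
  assumes "p > 0"
  shows "lpnorm p (c *\<^sub>R w) = \<bar>c\<bar> * lpnorm p w"
proof -
  have "lpnorm p (c *\<^sub>R w) = (\<bar>c\<bar> powr p * (\<Sum>i\<in>UNIV. \<bar>w $ i\<bar> powr p)) powr (1 / p)"
    by (simp add: lpnorm_def abs_mult powr_mult sum_distrib_left)
  also have "\<dots> = \<bar>c\<bar> * lpnorm p w"
    using assms by (simp add: lpnorm_def powr_mult sum_nonneg powr_powr)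
  finally show ?thesis .
qed

lemma continuous_on_lpnorm:
  assumes "p > 0"
  shows "continuous_on UNIV (lpnorm p)"
  unfolding lpnorm_def[abs_def] using assms
  by (intro continuous_on_powr' continuous_on_sum continuous_intros) (auto simp: sum_nonneg)

lemma compact_lpnorm_ball:
  assumes "p > 0"
  shows "compact {w :: real^'d. lpnorm p w \<le> B}"
proof (unfold compact_eq_bounded_closed, intro conjI)
  have "norm w \<le> real CARD('d) * B" if "lpnorm p w \<le> B" for w :: "real^'d"
  proof -
    have "(\<Sum>i\<in>UNIV. \<bar>w $ i\<bar>) \<le> (\<Sum>i\<in>(UNIV :: 'd set). B)"
      using abs_component_le_lpnorm[OF assms, of w] that by (intro sum_mono) (meson order_trans)
    then show ?thesis
      using norm_le_l1_cart[of w] by simp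
  qed
  then show "bounded {w :: real^'d. lpnorm p w \<le> B}"
    by (intro boundedI) blast
  show "closed {w :: real^'d. lpnorm p w \<le> B}"
    using continuous_on_lpnorm[OF assms] by (intro closed_Collect_le continuous_intros) auto
qed

lemma lpnorm_midpoint_less_one:
  fixes u v :: "real^'d"
  assumes "p > 1" "lpnorm p u \<le> 1" "lpnorm p v \<le> 1" "u \<noteq> v"
  shows "lpnorm p ((1 / 2) *\<^sub>R (u + v)) < 1"
proof -
  have p: "p > 0"
    using assms(1) by simp
  obtain j where j: "u $ j \<noteq> v $ j"
    using assms(4) by (auto simp: vec_eq_iff)
  have "lpnorm p ((1 / 2) *\<^sub>R (u + v)) powr p = (\<Sum>i\<in>UNIV. \<bar>(u $ i + v $ i) / 2\<bar> powr p)"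
    by (simp add: lpnorm_powr[OF p])
  also have "\<dots> < (\<Sum>i\<in>UNIV. (\<bar>u $ i\<bar> powr p + \<bar>v $ i\<bar> powr p) / 2)"
    using abs_midpoint_powr_le abs_midpoint_powr_less[OF assms(1) j] assms(1)
    by (intro sum_strict_mono_ex1) auto
  also have "\<dots> = (lpnorm p u powr p + lpnorm p v powr p) / 2"
    by (simp add: lpnorm_powr[OF p] sum.distrib flip: sum_divide_distrib)
  also have "\<dots> \<le> 1"
    using powr_mono2[of p "lpnorm p u" 1] powr_mono2[of p "lpnorm p v" 1] assms(2,3) p
    by (simp add: lpnorm_nonneg)
  finally show ?thesis
    using p powr_mono2[of p 1 "lpnorm p ((1 / 2) *\<^sub>R (u + v))"] by fastforce
qed

context
  fixes n :: nat and x :: "nat \<Rightarrow> real^'d" and y :: "nat \<Rightarrow> real"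
  assumes n_pos: "n > 0"
begin

lemma margin_le: "i < n \<Longrightarrow> margin n x y w \<le> y i * (x i \<bullet> w)"
  unfolding margin_def by (rule Min_le) auto

lemma margin_attained: "\<exists>i<n. margin n x y w = y i * (x i \<bullet> w)"
proof -
  have "margin n x y w \<in> (\<lambda>i. y i * (x i \<bullet> w)) ` {..<n}"
    unfolding margin_def using n_pos by (intro Min_in) auto
  then show ?thesis
    by auto
qed

lemma margin_scaleR:
  assumes "c \<ge> 0"
  shows "margin n x y (c *\<^sub>R w) = c * margin n x y w"
proof -
  have "mono ((*) c)"
    using assms by (simp add: mono_def mult_left_mono)
  then have "c * margin n x y w = Min ((*) c ` (\<lambda>i. y i * (x i \<bullet> w)) ` {..<n})"
    unfolding margin_def using n_pos by (intro mono_Min_commute) auto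
  then show ?thesis
    by (simp add: margin_def image_image mult.left_commute)
qed

lemma margin_superadditive: "margin n x y u + margin n x y v \<le> margin n x y (u + v)"
proof -
  obtain j where "j < n" "margin n x y (u + v) = y j * (x j \<bullet> (u + v))"
    using margin_attained by blast
  then show ?thesis
    using margin_le[of j u] margin_le[of j v] by (simp add: algebra_simps inner_add_right)
qed

lemma continuous_on_margin: "continuous_on UNIV (margin n x y)"
  unfolding margin_def[abs_def] using n_pos
  by (intro continuous_on_Min_finite continuous_intros) auto

lemma margin_le_lpnorm_mult_max_margin:
  assumes "p > 0" "is_max_margin p n x y u"
  shows "margin n x y w \<le> lpnorm p w * margin n x y u"
proof (cases "w = 0")
  case True
  then show ?thesis
    using margin_scaleR[of 0 u] lpnorm_eq_0_iff[OF assms(1), of w] by simp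
next
  case False
  then have w: "lpnorm p w > 0"
    using lpnorm_eq_0_iff[OF assms(1)] lpnorm_nonneg[of p w] by fastforce
  then have "lpnorm p ((1 / lpnorm p w) *\<^sub>R w) \<le> 1"
    by (simp add: lpnorm_scaleR[OF assms(1)])
  then have "margin n x y ((1 / lpnorm p w) *\<^sub>R w) \<le> margin n x y u"
    using assms(2) unfolding is_max_margin_def by blast
  then show ?thesis
    using w by (simp add: margin_scaleR field_simps)
qed

lemma max_margin_exists:
  assumes "p > 0"
  shows "\<exists>u. is_max_margin p n x y u"
proof -
  have "lpnorm p (0 :: real^'d) \<le> 1"
    using lpnorm_eq_0_iff[OF assms, of "0 :: real^'d"] by simp
  then obtain u where "u \<in> {w. lpnorm p w \<le> 1}"
      "\<forall>w \<in> {w. lpnorm p w \<le> 1}. margin n x y w \<le> margin n x y u"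
    using continuous_attains_sup[OF compact_lpnorm_ball[OF assms]]
      continuous_on_subset[OF continuous_on_margin] by blast
  then show ?thesis
    unfolding is_max_margin_def by auto
qed

lemma max_margin_unique:
  assumes "p > 1" "is_max_margin p n x y u" "is_max_margin p n x y v" "margin n x y u > 0"
  shows "u = v"
proof (rule ccontr)
  assume "u \<noteq> v"
  define m where "m = (1 / 2) *\<^sub>R (u + v)"
  have "lpnorm p m < 1"
    using lpnorm_midpoint_less_one assms \<open>u \<noteq> v\<close> unfolding m_def is_max_margin_def by blast
  have "margin n x y u = margin n x y v"
    using assms(2,3) unfolding is_max_margin_def by (auto intro: antisym)
  then have "margin n x y u \<le> margin n x y m"
    using margin_superadditive[of u v] by (simp add: m_def margin_scaleR)
  also have "\<dots> \<le> lpnorm p m * margin n x y u"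
    using assms by (intro margin_le_lpnorm_mult_max_margin) auto
  also have "\<dots> < margin n x y u"
    using \<open>lpnorm p m < 1\<close> assms(4) by simp
  finally show False
    by simp
qed

end

lemma separable_imp_margin_pos:
  assumes "n > 0" "\<forall>i<n. y i = 1 \<or> y i = -1" "linearly_separable n x y"
  shows "\<exists>w. margin n x y w > 0"
proof -
  obtain w where w: "\<forall>i<n. sgn (w \<bullet> x i) = y i"
    using assms(3) unfolding linearly_separable_def by blast
  have "y i * (x i \<bullet> w) > 0" if "i < n" for i
  proof -
    have "y i * (x i \<bullet> w) = \<bar>w \<bullet> x i\<bar>"
      using w that by (simp add: inner_commute abs_sgn)
    moreover have "w \<bullet> x i \<noteq> 0"
      using w assms(2) that by force
    ultimately show ?thesis
      by simp
  qed
  moreover obtain i where "i < n" "margin n x y w = y i * (x i \<bullet> w)"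
    using margin_attained[OF assms(1)] by blast
  ultimately have "margin n x y w > 0"
    by auto
  then show ?thesis ..
qed

lemma exp_tail_pos:
  fixes loss :: "real \<Rightarrow> real"
  assumes "antimono loss" "b > 0" "((\<lambda>z. loss z * exp (a * z)) \<longlongrightarrow> b) at_top"
  shows "loss z > 0"
proof -
  have "\<forall>\<^sub>F t in at_top. z \<le> t \<and> loss t * exp (a * t) > 0"
    using eventually_ge_at_top[of z] order_tendstoD(1)[OF assms(3,2)] by (rule eventually_conj)
  then obtain t where "t \<ge> z" "loss t * exp (a * t) > 0"
    using eventually_happens by force
  then show ?thesis
    using antimonoD[OF assms(1)] by (fastforce simp: zero_less_mult_iff)
qed

lemma exp_tail_ratio_tendsto_0:
  fixes loss :: "real \<Rightarrow> real"
  assumes "a > 0" "b > 0" "((\<lambda>z. loss z * exp (a * z)) \<longlongrightarrow> b) at_top" "0 < g1" "g1 < g2"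
  shows "((\<lambda>B. loss (B * g2) / loss (B * g1)) \<longlongrightarrow> 0) at_top"
proof -
  have tail_at: "((\<lambda>B. loss (B * g) * exp (a * (B * g))) \<longlongrightarrow> b) at_top" if "g > 0" for g
    using assms(3) filterlim_at_top_mult_tendsto_pos[OF tendsto_const that filterlim_ident]
    by (rule filterlim_compose)
  have "filterlim (\<lambda>B. - (a * (g2 - g1) * B)) at_bot at_top"
    using assms filterlim_tendsto_pos_mult_at_top[OF tendsto_const _ filterlim_ident, of "a * (g2 - g1)"]
    by (simp add: filterlim_uminus_at_top[symmetric])
  then have decay: "((\<lambda>B. exp (- (a * (g2 - g1) * B))) \<longlongrightarrow> 0) at_top"
    by (rule filterlim_compose[OF exp_at_bot])
  \<comment> \<open>this product equals the ratio wherever loss (B * g1) \<noteq> 0\<close>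
  have "((\<lambda>B. loss (B * g2) * exp (a * (B * g2)) / (loss (B * g1) * exp (a * (B * g1)))
          * exp (- (a * (g2 - g1) * B))) \<longlongrightarrow> b / b * 0) at_top"
    using assms by (intro tendsto_mult tendsto_divide tail_at decay) auto
  moreover have "eventually (\<lambda>B. loss (B * g1) \<noteq> 0) at_top"
    using order_tendstoD(1)[OF tail_at[OF assms(4)] assms(2)] by eventually_elim auto
  ultimately show ?thesis
    using assms(2)
    by (auto elim!: Lim_transform_eventually simp: exp_minus exp_add[symmetric] algebra_simps)
qed

lemma continuous_on_emp_loss:
  assumes "convex_on UNIV loss"
  shows "continuous_on UNIV (emp_loss loss n x y)"
  unfolding emp_loss_def[abs_def]
  by (intro continuous_intros continuous_on_compose2[OF convex_on_continuous[OF open_UNIV assms]])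
    auto

lemma loss_le_emp_loss:
  assumes "n > 0" "antimono loss" "\<And>z. loss z \<ge> 0" "margin n x y w \<le> t"
  shows "loss t \<le> real n * emp_loss loss n x y w"
proof -
  obtain i where "i < n" "margin n x y w = y i * (x i \<bullet> w)"
    using margin_attained[OF assms(1)] by blast
  then have "loss t \<le> loss (y i * (w \<bullet> x i))"
    using assms(4) antimonoD[OF assms(2)] by (simp add: inner_commute)
  also have "\<dots> \<le> (\<Sum>j<n. loss (y j * (w \<bullet> x j)))"
    using \<open>i < n\<close> assms(3) by (intro member_le_sum) auto
  finally show ?thesis
    using assms(1) by (simp add: emp_loss_def)
qed

lemma emp_loss_le_loss:
  assumes "n > 0" "antimono loss" "t \<le> margin n x y w"
  shows "emp_loss loss n x y w \<le> loss t"
proof -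
  have "(\<Sum>j<n. loss (y j * (w \<bullet> x j))) \<le> (\<Sum>j<n. loss t)"
  proof (intro sum_mono antimonoD[OF assms(2)])
    fix j assume "j \<in> {..<n}"
    then show "t \<le> y j * (w \<bullet> x j)"
      using margin_le[OF assms(1), of j x y w] assms(3) by (simp add: inner_commute)
  qed
  then show ?thesis
    using assms(1) by (simp add: emp_loss_def divide_le_eq mult.commute)
qed

lemma reg_min_exists:
  fixes L :: "real^'d \<Rightarrow> real"
  assumes "p > 0" "continuous_on UNIV L" "B \<ge> 0"
  shows "\<exists>w. is_reg_min p L B w"
proof -
  have "lpnorm p (0 :: real^'d) \<le> B"
    using lpnorm_eq_0_iff[OF assms(1), of "0 :: real^'d"] assms(3) by simp
  then obtain w where "w \<in> {w. lpnorm p w \<le> B}" "\<forall>v \<in> {w. lpnorm p w \<le> B}. L w \<le> L v"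
    using continuous_attains_inf[OF compact_lpnorm_ball[OF assms(1)]]
      continuous_on_subset[OF assms(2)] by blast
  then show ?thesis
    unfolding is_reg_min_def by auto
qed

lemma reg_path_margin_eventually_gt:
  fixes loss :: "real \<Rightarrow> real" and wbar :: "real \<Rightarrow> real^'d"
  assumes "n > 0" "p > 0" "antimono loss" "a > 0" "b > 0"
    and tail: "((\<lambda>z. loss z * exp (a * z)) \<longlongrightarrow> b) at_top"
    and reg: "\<forall>B>0. is_reg_min p (emp_loss loss n x y) B (wbar B)"
    and "lpnorm p u \<le> 1" "0 < g1" "g1 < margin n x y u"
  shows "eventually (\<lambda>B. g1 < margin n x y ((1 / B) *\<^sub>R wbar B)) at_top"
proof -
  define g where "g = margin n x y u"
  have loss_pos: "loss z > 0" for z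
    using exp_tail_pos[OF assms(3,5) tail] .
  have "eventually (\<lambda>B. loss (B * g) / loss (B * g1) < 1 / real n) at_top"
    using order_tendstoD(2)[OF exp_tail_ratio_tendsto_0[OF assms(4,5) tail assms(9)]] assms(1,10)
    by (simp add: g_def)
  with eventually_gt_at_top[of 0] show ?thesis
  proof eventually_elim
    case (elim B)
    show ?case
    proof (rule ccontr)
      assume "\<not> g1 < margin n x y ((1 / B) *\<^sub>R wbar B)"
      then have "margin n x y (wbar B) \<le> B * g1"
        using elim margin_scaleR[OF assms(1), where c = B and w = "(1 / B) *\<^sub>R wbar B"]
        by (simp add: mult_left_mono)
      then have "loss (B * g1) \<le> real n * emp_loss loss n x y (wbar B)"
        using loss_le_emp_loss[OF assms(1,3)] loss_pos less_imp_le by blast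
      also have "emp_loss loss n x y (wbar B) \<le> emp_loss loss n x y (B *\<^sub>R u)"
        using reg elim assms(8) lpnorm_scaleR[OF assms(2), of B u]
        unfolding is_reg_min_def by (simp add: mult_left_le)
      also have "\<dots> \<le> loss (B * g)"
        using elim
        by (intro emp_loss_le_loss[OF assms(1,3)]) (simp add: margin_scaleR[OF assms(1)] g_def)
      finally have "loss (B * g1) \<le> real n * loss (B * g)"
        using assms(1) by simp
      then show False
        using elim loss_pos[of "B * g1"] assms(1) by (simp add: field_simps)
    qed
  qed
qed

lemma reg_path_tendsto_max_margin:
  fixes loss :: "real \<Rightarrow> real" and wbar :: "real \<Rightarrow> real^'d"
  assumes "n > 0" "p > 1" "antimono loss" "a > 0" "b > 0"
    and tail: "((\<lambda>z. loss z * exp (a * z)) \<longlongrightarrow> b) at_top"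
    and reg: "\<forall>B>0. is_reg_min p (emp_loss loss n x y) B (wbar B)"
    and u: "is_max_margin p n x y u" "margin n x y u > 0"
  shows "((\<lambda>B. (1 / B) *\<^sub>R wbar B) \<longlongrightarrow> u) at_top"
proof (rule tendsto_unique_maximizer[where K = "{w. lpnorm p w \<le> 1}" and f = "margin n x y"])
  have p: "p > 0"
    using assms(2) by simp
  show "compact {w :: real^'d. lpnorm p w \<le> 1}"
    using compact_lpnorm_ball[OF p] .
  show "continuous_on {w. lpnorm p w \<le> 1} (margin n x y)"
    using continuous_on_subset[OF continuous_on_margin[OF assms(1)]] by blast
  show "u \<in> {w. lpnorm p w \<le> 1}"
    using u(1) unfolding is_max_margin_def by blast
  show "margin n x y w < margin n x y u" if "w \<in> {w. lpnorm p w \<le> 1}" "w \<noteq> u" for w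
  proof -
    have "margin n x y w \<le> margin n x y u"
      using u(1) that(1) unfolding is_max_margin_def by blast
    moreover have "\<not> is_max_margin p n x y w"
      using max_margin_unique[OF assms(1,2) u(1) _ u(2)] that(2) by blast
    ultimately show ?thesis
      using u(1) that(1) unfolding is_max_margin_def by force
  qed
  show "eventually (\<lambda>B. (1 / B) *\<^sub>R wbar B \<in> {w. lpnorm p w \<le> 1}) at_top"
    using eventually_gt_at_top[of 0]
  proof eventually_elim
    case (elim B)
    then show ?case
      using reg by (simp add: is_reg_min_def lpnorm_scaleR[OF p] divide_le_eq)
  qed
  show "eventually (\<lambda>B. c < margin n x y ((1 / B) *\<^sub>R wbar B)) at_top"
    if "c < margin n x y u" for c
  proof -
    have "eventually (\<lambda>B. max c (margin n x y u / 2) < margin n x y ((1 / B) *\<^sub>R wbar B)) at_top"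
      using u that unfolding is_max_margin_def
      by (intro reg_path_margin_eventually_gt[OF assms(1) p assms(3-5) tail reg]) auto
    then show ?thesis
      by (rule eventually_mono) simp
  qed
qed

theorem proposition1:
  fixes p q C a b :: real and n :: nat
    and x :: "nat \<Rightarrow> real^'d" and y :: "nat \<Rightarrow> real"
    and loss :: "real \<Rightarrow> real"
  assumes p_gt1: "p > 1"
    and conj: "1 / p + 1 / q = 1"
    and n_pos: "n > 0"
    and labels: "\<forall>i<n. y i = 1 \<or> y i = -1"
    and sep: "linearly_separable n x y"
    and bounded: "\<forall>i<n. lpnorm q (x i) < C"
    and decr: "antimono loss"
    and cvx: "convex_on UNIV loss"
    and no_min: "\<forall>z. \<exists>z'. loss z' < loss z"
    and inf0: "(INF z. loss z) = 0"
    and a_pos: "a > 0" and b_pos: "b > 0"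
    and tail: "((\<lambda>z. loss z * exp (a * z)) \<longlongrightarrow> b) at_top"
  shows "(\<exists>!u. is_max_margin p n x y u)
       \<and> (\<forall>B\<ge>0. \<exists>w. is_reg_min p (emp_loss loss n x y) B w)
       \<and> (\<forall>wbar :: real \<Rightarrow> real^'d.
            (\<forall>B>0. is_reg_min p (emp_loss loss n x y) B (wbar B)) \<longrightarrow>
            ((\<lambda>B. (1 / B) *\<^sub>R wbar B) \<longlongrightarrow> (THE u. is_max_margin p n x y u)) at_top)"
proof -
  have p: "p > 0"
    using p_gt1 by simp
  obtain w where w: "margin n x y w > 0"
    using separable_imp_margin_pos[OF n_pos labels sep] by blast
  obtain u where u: "is_max_margin p n x y u"
    using max_margin_exists[OF n_pos p] by blast
  have "lpnorm p w * margin n x y u > 0"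
    using margin_le_lpnorm_mult_max_margin[OF n_pos p u, of w] w by linarith
  then have u_pos: "margin n x y u > 0"
    using lpnorm_nonneg[of p w] by (simp add: zero_less_mult_iff)
  have unique: "\<exists>!u. is_max_margin p n x y u"
    using u max_margin_unique[OF n_pos p_gt1 u _ u_pos] by blast
  then have "(THE u. is_max_margin p n x y u) = u"
    using u by (rule the1_equality)
  then show ?thesis
    using unique reg_min_exists[OF p continuous_on_emp_loss[OF cvx]]
      reg_path_tendsto_max_margin[OF n_pos p_gt1 decr a_pos b_pos tail _ u u_pos]
    by auto
qed

end
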